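(* Fix $d\ge2$, $k\in\{1,\dots,d-1\}$ and $\theta\in[0,1)$. Let $\sigma_1\ge\dots\ge\sigma_d\ge0$ satisfy $\sigma_{k+2}=\dots=\sigma_d=0$ and $\sum_{j=1}^{k+1}\sigma_j^2=1$. If $\theta=0$ assume $\sigma_{k+1}=0$; if $\theta>0$ assume $\sigma_{k+1}\le\frac\theta k\sum_{j=1}^k\sigma_j$. Then $$\sum_{j=1}^{k+1}\sigma_j\le\frac{k+\theta}{\sqrt{k+\theta^2}},$$ with equality if and only if $\sigma_1=\dots=\sigma_k=\frac1{\sqrt{k+\theta^2}}$ and $\sigma_{k+1}=\frac\theta{\sqrt{k+\theta^2}}$. *)

theory Defs
  imports Complex_Main
begin

end

theory Submission
  imports Defs "HOL-Analysis.Analysis"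
begin

text \<open>Write \<open>S = \<sigma>\<^sub>1 + \<dots> + \<sigma>\<^sub>k\<close>, \<open>t = \<sigma>\<^sub>k\<^sub>+\<^sub>1\<close> and \<open>c = sqrt (k + \<theta>\<^sup>2)\<close>.
  Cauchy-Schwarz against the weight vector \<open>(1, \<dots>, 1, \<theta>)\<close> gives \<open>S + \<theta> t \<le> c\<close>, while
  the hypothesis \<open>k t \<le> \<theta> S\<close> together with \<open>S\<^sup>2 \<le> k (1 - t\<^sup>2)\<close> gives \<open>t \<le> \<theta> / c\<close>.
  Hence \<open>S + t = (S + \<theta> t) + (1 - \<theta>) t \<le> c + (1 - \<theta>) \<theta> / c = (k + \<theta>) / c\<close>.
  Equality forces equality in both estimates, and then \<open>\<sigma>\<^sub>1, \<dots>, \<sigma>\<^sub>k\<close> have mean and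
  mean square \<open>1 / c\<close> and \<open>1 / c\<^sup>2\<close>, so they all equal \<open>1 / c\<close>.\<close>

lemma eq_const_if_sum_and_sum_squares_eq:
  fixes f :: "'a \<Rightarrow> real" and m :: real
  assumes "finite A"
    and "(\<Sum>i\<in>A. f i) = card A * m" and "(\<Sum>i\<in>A. (f i)\<^sup>2) = card A * m\<^sup>2"
    and "i \<in> A"
  shows "f i = m"
proof -
  have "(\<Sum>i\<in>A. (f i - m)\<^sup>2) = (\<Sum>i\<in>A. (f i)\<^sup>2) - 2 * m * (\<Sum>i\<in>A. f i) + card A * m\<^sup>2"
    by (simp add: power2_diff sum.distrib sum_subtractf algebra_simps
        flip: sum_distrib_left sum_distrib_right)
  also have "\<dots> = 0"
    using assms(2,3) by (simp add: power2_eq_square)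
  finally have "(f i - m)\<^sup>2 = 0"
    using assms(1,4) by (simp add: sum_nonneg_eq_0_iff)
  then show ?thesis by simp
qed

lemma weighted_sum_le_sqrt:
  fixes \<sigma> :: "nat \<Rightarrow> real" and k :: nat and \<theta> :: real
  assumes "(\<Sum>j=1..k+1. (\<sigma> j)\<^sup>2) = 1"
  shows "(\<Sum>j=1..k. \<sigma> j) + \<theta> * \<sigma> (k+1) \<le> sqrt (real k + \<theta>\<^sup>2)"
proof -
  define w where "w j = (if j = k + 1 then \<theta> else 1)" for j
  have "(\<Sum>j=1..k+1. w j * \<sigma> j) = (\<Sum>j=1..k. \<sigma> j) + \<theta> * \<sigma> (k+1)"
    by (simp add: w_def)
  moreover have "(\<Sum>j=1..k+1. (w j)\<^sup>2) = real k + \<theta>\<^sup>2"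
    by (simp add: w_def)
  ultimately have "((\<Sum>j=1..k. \<sigma> j) + \<theta> * \<sigma> (k+1))\<^sup>2 \<le> real k + \<theta>\<^sup>2"
    using Cauchy_Schwarz_ineq_sum[of w \<sigma> "{1..k+1}"] assms by simp
  then show ?thesis by (rule real_le_rsqrt)
qed

lemma tail_le_div_sqrt:
  fixes k \<theta> S Q t :: real
  assumes "0 < k" "0 \<le> \<theta>" "0 \<le> t"
    and "S\<^sup>2 \<le> k * Q" "Q + t\<^sup>2 = 1" "k * t \<le> \<theta> * S"
  shows "t \<le> \<theta> / sqrt (k + \<theta>\<^sup>2)"
proof -
  have "k * (k * t\<^sup>2) = (k * t)\<^sup>2" by (simp add: power2_eq_square)
  also have "\<dots> \<le> (\<theta> * S)\<^sup>2"
    using assms(1,3,6) by (simp add: power_mono)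
  also have "\<dots> \<le> \<theta>\<^sup>2 * (k * Q)"
    using assms(4) by (simp add: power_mult_distrib mult_left_mono)
  also have "\<dots> = k * (\<theta>\<^sup>2 * (1 - t\<^sup>2))"
    using assms(5) by (simp add: algebra_simps flip: eq_diff_eq)
  finally have "k * t\<^sup>2 \<le> \<theta>\<^sup>2 * (1 - t\<^sup>2)"
    using assms(1) by simp
  then have "(t * sqrt (k + \<theta>\<^sup>2))\<^sup>2 \<le> \<theta>\<^sup>2"
    using assms(1,2) by (simp add: power_mult_distrib algebra_simps)
  then have "t * sqrt (k + \<theta>\<^sup>2) \<le> \<theta>"
    using assms(2) by (rule power2_le_imp_le)
  moreover have "0 < sqrt (k + \<theta>\<^sup>2)"
    using assms(1) by (simp add: add_pos_nonneg)
  ultimately show ?thesis by (simp add: pos_le_divide_eq)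
qed

lemma add_le_of_weighted_bounds:
  fixes k \<theta> S t :: real
  assumes "0 < k" "\<theta> < 1"
    and weighted: "S + \<theta> * t \<le> sqrt (k + \<theta>\<^sup>2)" and tail: "t \<le> \<theta> / sqrt (k + \<theta>\<^sup>2)"
  shows "S + t \<le> (k + \<theta>) / sqrt (k + \<theta>\<^sup>2)"
    and "S + t = (k + \<theta>) / sqrt (k + \<theta>\<^sup>2) \<Longrightarrow>
      t = \<theta> / sqrt (k + \<theta>\<^sup>2) \<and> S = k / sqrt (k + \<theta>\<^sup>2)"
proof -
  define c where "c = sqrt (k + \<theta>\<^sup>2)"
  have "0 < c" using assms(1) by (simp add: c_def add_pos_nonneg)
  moreover have "c\<^sup>2 = k + \<theta>\<^sup>2" using assms(1) by (simp add: c_def add_pos_nonneg less_imp_le)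
  ultimately have split: "(k + \<theta>) / c = c + (1 - \<theta>) * (\<theta> / c)"
    by (simp add: field_simps power2_eq_square)
  have tail': "(1 - \<theta>) * t \<le> (1 - \<theta>) * (\<theta> / c)"
    using mult_left_mono[OF tail, of "1 - \<theta>"] assms(2) by (simp add: c_def)
  with weighted show "S + t \<le> (k + \<theta>) / sqrt (k + \<theta>\<^sup>2)"
    unfolding c_def[symmetric] split by (simp add: algebra_simps)
  assume "S + t = (k + \<theta>) / sqrt (k + \<theta>\<^sup>2)"
  with weighted tail' have "(1 - \<theta>) * t = (1 - \<theta>) * (\<theta> / c)"
    unfolding c_def[symmetric] split by (simp add: algebra_simps)
  with assms(2) have "t = \<theta> / c" by (subst (asm) mult_left_cancel) auto
  with \<open>S + t = _\<close> \<open>0 < c\<close> show "t = \<theta> / sqrt (k + \<theta>\<^sup>2) \<and> S = k / sqrt (k + \<theta>\<^sup>2)"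
    unfolding c_def[symmetric] by (simp add: field_simps)
qed

lemma extremal_head_eq:
  fixes \<sigma> :: "nat \<Rightarrow> real" and k :: nat and \<theta> :: real
  assumes "0 < k" and "(\<Sum>j=1..k+1. (\<sigma> j)\<^sup>2) = 1"
    and "(\<Sum>j=1..k. \<sigma> j) = real k / sqrt (real k + \<theta>\<^sup>2)"
    and "\<sigma> (k+1) = \<theta> / sqrt (real k + \<theta>\<^sup>2)"
    and "j \<in> {1..k}"
  shows "\<sigma> j = 1 / sqrt (real k + \<theta>\<^sup>2)"
proof (rule eq_const_if_sum_and_sum_squares_eq[OF finite_atLeastAtMost _ _ assms(5)])
  define c where "c = sqrt (real k + \<theta>\<^sup>2)"
  have "0 < c" using assms(1) by (simp add: c_def add_pos_nonneg)
  show "(\<Sum>j=1..k. \<sigma> j) = card {1..k} * (1 / c)"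
    using assms(3) by (simp add: c_def)
  have "(\<Sum>j=1..k. (\<sigma> j)\<^sup>2) = 1 - \<theta>\<^sup>2 / c\<^sup>2"
    using assms(2,4) by (simp add: c_def power_divide)
  also have "\<dots> = real k * (1 / c)\<^sup>2"
    using \<open>0 < c\<close> assms(1) by (simp add: c_def power_divide field_simps)
  finally show "(\<Sum>j=1..k. (\<sigma> j)\<^sup>2) = card {1..k} * (1 / c)\<^sup>2"
    by simp
qed

theorem lemma3p15:
  fixes d k :: nat and \<theta> :: real and \<sigma> :: "nat \<Rightarrow> real"
  assumes "d \<ge> 2" and "1 \<le> k" and "k \<le> d - 1"
    and "0 \<le> \<theta>" and "\<theta> < 1"
    and "\<And>i j. 1 \<le> i \<Longrightarrow> i \<le> j \<Longrightarrow> j \<le> d \<Longrightarrow> \<sigma> j \<le> \<sigma> i"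
    and "\<sigma> d \<ge> 0"
    and "\<And>j. k + 2 \<le> j \<Longrightarrow> j \<le> d \<Longrightarrow> \<sigma> j = 0"
    and "(\<Sum>j=1..k+1. (\<sigma> j)\<^sup>2) = 1"
    and "\<theta> = 0 \<Longrightarrow> \<sigma> (k+1) = 0"
    and "\<theta> > 0 \<Longrightarrow> \<sigma> (k+1) \<le> \<theta> / real k * (\<Sum>j=1..k. \<sigma> j)"
  shows "(\<Sum>j=1..k+1. \<sigma> j) \<le> (real k + \<theta>) / sqrt (real k + \<theta>\<^sup>2)
    \<and> ((\<Sum>j=1..k+1. \<sigma> j) = (real k + \<theta>) / sqrt (real k + \<theta>\<^sup>2)
       \<longleftrightarrow> (\<forall>j\<in>{1..k}. \<sigma> j = 1 / sqrt (real k + \<theta>\<^sup>2))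
           \<and> \<sigma> (k+1) = \<theta> / sqrt (real k + \<theta>\<^sup>2))"
proof -
  define S where "S = (\<Sum>j=1..k. \<sigma> j)"
  define Q where "Q = (\<Sum>j=1..k. (\<sigma> j)\<^sup>2)"
  define t where "t = \<sigma> (k+1)"
  define c where "c = sqrt (real k + \<theta>\<^sup>2)"
  have k: "0 < real k" using assms(2) by simp
  have "\<sigma> d \<le> t" using assms(1,3,6) by (simp add: t_def)
  with assms(7) have "0 \<le> t" by simp
  have "S\<^sup>2 \<le> real k * Q"
    using sum_squared_le_sum_of_squares[of \<sigma> "{1..k}"] by (simp add: S_def Q_def mult.commute)
  have "Q + t\<^sup>2 = 1" using assms(9) by (simp add: Q_def t_def)
  have "real k * t \<le> \<theta> * S"
    using assms(4,10,11) k by (cases "\<theta> = 0") (auto simp: S_def t_def field_simps)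
  then have "t \<le> \<theta> / c"
    using tail_le_div_sqrt k assms(4) \<open>0 \<le> t\<close> \<open>S\<^sup>2 \<le> _\<close> \<open>Q + t\<^sup>2 = 1\<close> by (simp add: c_def)
  moreover have "S + \<theta> * t \<le> c"
    using weighted_sum_le_sqrt[OF assms(9)] by (simp add: S_def t_def c_def)
  ultimately have bound: "S + t \<le> (real k + \<theta>) / c"
    and tight: "S + t = (real k + \<theta>) / c \<Longrightarrow> t = \<theta> / c \<and> S = real k / c"
    using add_le_of_weighted_bounds[OF k assms(5)] by (simp_all add: c_def)
  have "S + t = (real k + \<theta>) / c \<longleftrightarrow> (\<forall>j\<in>{1..k}. \<sigma> j = 1 / c) \<and> t = \<theta> / c"
  proof
    assume "S + t = (real k + \<theta>) / c"
    with tight have "t = \<theta> / c" and "S = real k / c" by simp_all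
    with extremal_head_eq[of k \<sigma> \<theta>] assms(2,9)
    show "(\<forall>j\<in>{1..k}. \<sigma> j = 1 / c) \<and> t = \<theta> / c"
      by (simp add: S_def t_def c_def)
  qed (simp add: S_def add_divide_distrib)
  with bound show ?thesis by (simp add: S_def t_def c_def)
qed

end
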